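(* Let $n\ge 1$, $k\ge 1$, and let $\gamma=((i_1\,j_1),\dots,(i_k\,j_k))\in\Sigma_n(k)$. Fix $l\in\{1,\dots,k\}$. Then: 1. $i_l<x$ for every $x\in C_{\gamma_{l-1}}(j_l)$; moreover, $i_l$ is the largest element $y$ of $C_{\gamma_{l-1}}(i_l)$ such that $y$ is smaller than every element of $C_{\gamma_{l-1}}(j_l)$. 2. $j_l=\max C_{\gamma_{l-1}}(j_l)$. 3. $i_l<x$ for every $x\in C_{\gamma_{l-1}}(i_l+1)$. 4. If $i_l+1\notin\{i_1,\dots,i_{l-1}\}$, then $C_{\gamma_{l-1}}(i_l+1)=\{i_l+1\}$. 5. If $k=n-1$, $i_l=\max\{i_1,\dots,i_{n-1}\}$ and $l=\max\{s\in\{1,\dots,k\}: i_s=i_l\}$, then $j_l=i_l+1$.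
   Context: Let $n\ge1$. $\mathfrak S_n$ is the symmetric group on $\{1,\dots,n\}$; products of permutations are composed from right to left, i.e. $(\sigma\pi)(x)=\sigma(\pi(x))$. $\mathsf T_n$ denotes the set of transpositions of $\mathfrak S_n$; a transposition is always written $(i\,j)$ with $i<j$. For $\sigma\in\mathfrak S_n$, $\ell(\sigma)$ is the number of cycles of $\sigma$ (fixed points counted as cycles) and $|\sigma|=n-\ell(\sigma)$. For $\sigma_1,\sigma_2\in\mathfrak S_n$, write $\sigma_1\preccurlyeq\sigma_2$ iff $|\sigma_2|=|\sigma_1|+|\sigma_1^{-1}\sigma_2|$. For $k\ge0$, $\Sigma_n(k)=\{(\tau_1,\dots,\tau_k)\in(\mathsf T_n)^k : |\tau_1\cdots\tau_k|=k,\ \tau_1\cdots\tau_k\preccurlyeq(1\,2\,\dots\,n)\}$. For $\gamma=(\tau_1,\dots,\tau_k)\in\Sigma_n(k)$ and $0\le l\le k$, $\gamma_l=\tau_1\cdots\tau_l$ (so $\gamma_0$ is the identity). For $\pi\in\mathfrak S_n$ and $x\in\{1,\dots,n\}$, $C_\pi(x)$ denotes the cycle of $\pi$ containing $x$, regarded as a subset of $\{1,\dots,n\}$. *)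

theory Defs
  imports "HOL-Combinatorics.Combinatorics"
begin

(* Permutations of {1..n} are functions nat => nat that permute {1..n};
   composition is right-to-left: (s o p) x = s (p x). *)

definition cyc :: "(nat \<Rightarrow> nat) \<Rightarrow> nat \<Rightarrow> nat set" where
  "cyc p x = {(p ^^ m) x | m. True}"

definition ncycles :: "nat \<Rightarrow> (nat \<Rightarrow> nat) \<Rightarrow> nat" where
  "ncycles n p = card {cyc p x | x. x \<in> {1..n}}"

definition plen :: "nat \<Rightarrow> (nat \<Rightarrow> nat) \<Rightarrow> nat" where
  "plen n p = n - ncycles n p"

definition pleq :: "nat \<Rightarrow> (nat \<Rightarrow> nat) \<Rightarrow> (nat \<Rightarrow> nat) \<Rightarrow> bool" where
  "pleq n s1 s2 \<longleftrightarrow> plen n s2 = plen n s1 + plen n (inv s1 \<circ> s2)"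

definition longcyc :: "nat \<Rightarrow> nat \<Rightarrow> nat" where
  "longcyc n x = (if 1 \<le> x \<and> x < n then x + 1 else if x = n then 1 else x)"

(* A sequence of transpositions (i_1 j_1), ..., (i_k j_k) with i < j is
   represented by the list of pairs [(i_1,j_1), ..., (i_k,j_k)]. *)
definition valid_transp :: "nat \<Rightarrow> nat \<times> nat \<Rightarrow> bool" where
  "valid_transp n t \<longleftrightarrow> 1 \<le> fst t \<and> fst t < snd t \<and> snd t \<le> n"

definition tprod :: "(nat \<times> nat) list \<Rightarrow> nat \<Rightarrow> nat" where
  "tprod ts = foldr (\<lambda>t acc. transpose (fst t) (snd t) \<circ> acc) ts id"

definition gpref :: "(nat \<times> nat) list \<Rightarrow> nat \<Rightarrow> nat \<Rightarrow> nat" where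
  "gpref g l = tprod (take l g)"

definition Sigma_n :: "nat \<Rightarrow> nat \<Rightarrow> (nat \<times> nat) list set" where
  "Sigma_n n k = {g. length g = k \<and> (\<forall>t \<in> set g. valid_transp n t)
                   \<and> plen n (tprod g) = k \<and> pleq n (tprod g) (longcyc n)}"

end

theory Submission
  imports Defs
begin

text \<open>
  Let \<open>\<gamma> = ((i\<^sub>1 j\<^sub>1), \<dots>, (i\<^sub>k j\<^sub>k))\<close> be a geodesic chain below the long cycle \<open>c = (1 2 \<dots> n)\<close>.
  The proof rests on two classical facts. First, multiplying a permutation on the right by a
  transposition \<open>(a b)\<close> joins the cycles of \<open>a\<close> and \<open>b\<close> if they are different and splits their
  common cycle otherwise, so the length \<open>|\<sigma>|\<close> changes by exactly one; in a geodesic chain every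
  step \<open>\<gamma>\<^sub>l = \<gamma>\<^sub>l\<^sub>-\<^sub>1 (i\<^sub>l j\<^sub>l)\<close> therefore joins two cycles. Second, every permutation below \<open>c\<close> is
  noncrossing, expressed here as: each arc of the circle from a point \<open>x\<close> to its image is mapped
  into itself. Both \<open>\<gamma>\<^sub>l\<^sub>-\<^sub>1\<close> and \<open>\<gamma>\<^sub>l\<close> are thus noncrossing, and parts 1--3 of the theorem are
  read off from the arcs around \<open>i\<^sub>l\<close> and \<open>j\<^sub>l\<close> (locale \<open>noncrossing_join\<close>). Part 4 follows since the
  minimum of each nontrivial cycle of \<open>\<gamma>\<^sub>m\<close> is one of \<open>i\<^sub>1, \<dots>, i\<^sub>m\<close>. For part 5, if \<open>j\<^sub>l > i\<^sub>l + 1\<close>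
  then \<open>i\<^sub>l + 1\<close> is fixed by \<open>\<gamma>\<^sub>l\<close> and by all later steps, contradicting that \<open>\<gamma>\<^sub>n\<^sub>-\<^sub>1\<close> is an
  \<open>n\<close>-cycle.
\<close>

section \<open>Orbits of a permutation multiplied by a transposition\<close>

lemma orbit_subset_invariant:
  assumes "x \<in> S" "\<And>z. z \<in> S \<Longrightarrow> f z \<in> S"
  shows "orbit f x \<subseteq> S"
proof
  fix y assume "y \<in> orbit f x"
  then show "y \<in> S" by induct (use assms in auto)
qed

lemma orbit_eq_if_mem:
  assumes "permutation f" "y \<in> orbit f x"
  shows "orbit f y = orbit f x"
  using orbit_cyclic_eq3[OF cyclic_on_orbit'[OF assms(1)] assms(2)] .

lemma cyc_eq_orbit: "permutation p \<Longrightarrow> cyc p x = orbit p x"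
  unfolding cyc_def by (simp add: orbit_altdef_permutation)

lemma funpow_leaves_through:
  assumes "x \<in> X" "\<And>z. z \<in> X \<Longrightarrow> z \<noteq> a \<Longrightarrow> f z \<in> X" "(f ^^ N) x \<notin> X"
  shows "\<exists>m<N. (f ^^ m) x = a"
  using assms(3)
proof (induction N)
  case 0
  then show ?case using assms(1) by simp
next
  case (Suc N)
  show ?case
  proof (cases "(f ^^ N) x \<in> X")
    case True
    then have "(f ^^ N) x = a" using assms(2) Suc.prems by fastforce
    then show ?thesis by auto
  next
    case False
    then show ?thesis using Suc.IH less_Suc_eq by blast
  qed
qed

lemma transpose_joins:
  assumes pf: "permutation f" and nb: "b \<notin> orbit f a"
  shows "b \<in> orbit (f \<circ> transpose a b) a"
proof (rule ccontr)
  define g where "g = f \<circ> transpose a b"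
  define X where "X = orbit g a"
  assume "b \<notin> orbit (f \<circ> transpose a b) a"
  then have bX: "b \<notin> X" unfolding X_def g_def .
  have fbX: "f b \<in> X" using orbit.base[of g a] unfolding X_def g_def by simp
  have closed: "f z \<in> X" if "z \<in> X" "z \<noteq> a" for z
  proof -
    have "z \<noteq> b" using that bX by auto
    then have "g z = f z" using that unfolding g_def by simp
    then show ?thesis using that orbit.step[of z g a] unfolding X_def by simp
  qed
  have "b \<in> orbit f (f b)"
    using permutation_orbit_step[OF pf, of b] permutation_self_in_orbit[OF pf, of b] by simp
  then have "b \<in> {(f ^^ n) (f b) | n. True}" using orbit_altdef_permutation[OF pf, of "f b"] by simp
  then obtain N where "b = (f ^^ N) (f b)" by blast
  then have "(f ^^ N) (f b) \<notin> X" using bX by simp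
  then obtain m where "(f ^^ m) (f b) = a" using funpow_leaves_through[where f=f and a=a, OF fbX closed] by blast
  then have "a \<in> orbit f (f b)" using orbit_altdef_permutation[OF pf, of "f b"] by auto
  then have "a \<in> orbit f b" using permutation_orbit_step[OF pf, of b] by simp
  then have "b \<in> orbit f a" using orbit_swap[OF permutation_self_in_orbit[OF pf, of b]] by blast
  then show False using nb by simp
qed

lemma arc_to_first_visit_avoids:
  assumes pf: "permutation f" and ab: "a \<noteq> b" and ain: "a \<in> orbit f b"
    and m: "m \<le> funpow_dist f (f b) a"
  shows "(f ^^ m) (f b) \<noteq> b"
proof
  define t where "t = funpow_dist f (f b) a"
  have before: "(f ^^ q) (f b) \<noteq> a" if "q < t" for q
    using that unfolding t_def by (rule funpow_dist_least)
  assume "(f ^^ m) (f b) = b"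
  then have period: "(f ^^ Suc m) b = b" by (simp add: funpow_swap1)
  obtain r where "(f ^^ r) b = a" using ain orbit_altdef_permutation[OF pf, of b] by auto
  then have hit: "(f ^^ (r mod Suc m)) b = a" using funpow_mod_eq[of "Suc m" f b r] period by simp
  show False
  proof (cases "r mod Suc m")
    case 0
    then show ?thesis using hit ab by simp
  next
    case (Suc q)
    then have "(f ^^ q) (f b) = a" using hit by (simp add: funpow_swap1)
    moreover have "q < t" using Suc m mod_less_divisor[of "Suc m" r] unfolding t_def by linarith
    ultimately show False using before by blast
  qed
qed

text \<open>Multiplying on the right by \<open>(a b)\<close> with \<open>a, b\<close> in the same cycle separates them: the
  cycle of \<open>a\<close> under \<open>f \<circ> (a b)\<close> is the arc of \<open>f\<close> from \<open>f b\<close> to \<open>a\<close>.\<close>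
lemma transpose_separates:
  assumes pf: "permutation f" and ab: "a \<noteq> b" and bin: "b \<in> orbit f a"
  shows "b \<notin> orbit (f \<circ> transpose a b) a"
proof -
  define g where "g = f \<circ> transpose a b"
  have ain: "a \<in> orbit f b" using orbit_swap[OF permutation_self_in_orbit[OF pf, of a] bin] .
  define t where "t = funpow_dist f (f b) a"
  have ft: "(f ^^ t) (f b) = a"
    unfolding t_def using ain permutation_orbit_step[OF pf, of b] by (intro funpow_dist_prop) simp
  define W where "W = {(f ^^ m) (f b) | m. m \<le> t}"
  have bW: "b \<notin> W"
  proof
    assume "b \<in> W"
    then obtain m where "m \<le> t" "(f ^^ m) (f b) = b" unfolding W_def by auto
    then show False using arc_to_first_visit_avoids[OF pf ab ain, of m] unfolding t_def by blast
  qed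
  have aW: "a \<in> W" unfolding W_def using ft by auto
  have "g z \<in> W" if "z \<in> W" for z
  proof -
    obtain m where m: "m \<le> t" "z = (f ^^ m) (f b)" using \<open>z \<in> W\<close> unfolding W_def by auto
    show ?thesis
    proof (cases "m = t")
      case True
      then have "g z = (f ^^ 0) (f b)" using m ft unfolding g_def by simp
      then show ?thesis unfolding W_def by blast
    next
      case False
      then have "z \<noteq> a" using funpow_dist_least[of m f "f b" a] m unfolding t_def by auto
      moreover have "z \<noteq> b" using bW \<open>z \<in> W\<close> by auto
      ultimately have "g z = (f ^^ Suc m) (f b)" using m unfolding g_def by simp
      then show ?thesis unfolding W_def using False m(1) by (intro CollectI exI[of _ "Suc m"]) simp
    qed
  qed
  then have "orbit g a \<subseteq> W" using orbit_subset_invariant[OF aW] by blast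
  then show ?thesis using bW unfolding g_def by auto
qed

lemma transpose_join_orbits:
  assumes pf: "permutation f" and nb: "b \<notin> orbit f a"
  shows "orbit (f \<circ> transpose a b) a = orbit f a \<union> orbit f b"
    and "z \<notin> orbit f a \<union> orbit f b \<Longrightarrow> orbit (f \<circ> transpose a b) z = orbit f z"
proof -
  define g where "g = f \<circ> transpose a b"
  have ab: "a \<noteq> b" using nb permutation_self_in_orbit[OF pf] by auto
  have bg: "b \<in> orbit g a" unfolding g_def by (rule transpose_joins[OF pf nb])
  have ag: "a \<in> orbit g a"
    unfolding g_def by (intro permutation_self_in_orbit permutation_compose pf permutation_swap_id)
  have "g z \<in> orbit f a \<union> orbit f b" if "z \<in> orbit f a \<union> orbit f b" for z
    using that orbit.base[of f a] orbit.base[of f b] orbit.step[of z f] unfolding g_def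
    by (cases "z = a \<or> z = b") auto
  then have sub: "orbit g a \<subseteq> orbit f a \<union> orbit f b"
    by (intro orbit_subset_invariant) (auto intro: permutation_self_in_orbit[OF pf])
  have f_closed: "f z \<in> orbit g a" if "z \<in> orbit g a" for z
  proof -
    consider "z = a" | "z = b" | "z \<noteq> a" "z \<noteq> b" by blast
    then show ?thesis
    proof cases
      case 1
      then show ?thesis using orbit.step[OF bg] unfolding g_def by simp
    next
      case 2
      then show ?thesis using orbit.base[of g a] unfolding g_def by simp
    next
      case 3
      then show ?thesis using that orbit.step[of z g a] unfolding g_def by simp
    qed
  qed
  have "orbit f a \<subseteq> orbit g a" by (rule orbit_subset_invariant[OF ag f_closed])
  moreover have "orbit f b \<subseteq> orbit g a" by (rule orbit_subset_invariant[OF bg f_closed])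
  ultimately show "orbit (f \<circ> transpose a b) a = orbit f a \<union> orbit f b"
    using sub unfolding g_def by blast
  assume z: "z \<notin> orbit f a \<union> orbit f b"
  have "f y = g y" if "y \<in> orbit f z" for y
  proof -
    have "orbit f y = orbit f z" by (rule orbit_eq_if_mem[OF pf that])
    then have "y \<noteq> a" "y \<noteq> b" using z permutation_self_in_orbit[OF pf] by blast+
    then show ?thesis unfolding g_def by simp
  qed
  then have "orbit f z = orbit g z"
    by (intro orbit_cong0[of z "orbit f z"]) (auto intro: permutation_self_in_orbit[OF pf] orbit.step)
  then show "orbit (f \<circ> transpose a b) z = orbit f z" unfolding g_def by simp
qed

lemma transpose_join_orbit_mono:
  assumes pf: "permutation f" and nb: "b \<notin> orbit f a"
  shows "orbit f x \<subseteq> orbit (f \<circ> transpose a b) x"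
proof (cases "x \<in> orbit f a \<union> orbit f b")
  case True
  have pg: "permutation (f \<circ> transpose a b)" by (intro permutation_compose pf permutation_swap_id)
  note joined = transpose_join_orbits(1)[OF pf nb]
  have "orbit f x = orbit f a \<or> orbit f x = orbit f b" using True orbit_eq_if_mem[OF pf] by blast
  moreover have "orbit (f \<circ> transpose a b) x = orbit (f \<circ> transpose a b) a"
    using orbit_eq_if_mem[OF pg] True joined by blast
  ultimately show ?thesis using joined by auto
next
  case False
  then show ?thesis using transpose_join_orbits(2)[OF pf nb] by simp
qed

lemma transpose_join_orbit_of:
  assumes pf: "permutation f" and nb: "b \<notin> orbit f a"
  shows "orbit (f \<circ> transpose a b) x =
    (if x \<in> orbit f a \<union> orbit f b then orbit f a \<union> orbit f b else orbit f x)"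
proof (cases "x \<in> orbit f a \<union> orbit f b")
  case True
  have "permutation (f \<circ> transpose a b)" by (intro permutation_compose pf permutation_swap_id)
  then show ?thesis
    using True orbit_eq_if_mem transpose_join_orbits(1)[OF pf nb] by (metis (full_types))
next
  case False
  then show ?thesis using transpose_join_orbits(2)[OF pf nb] by simp
qed

section \<open>Counting cycles: the length function \<open>plen\<close>\<close>

lemma permutes_comp_transpose:
  "f permutes S \<Longrightarrow> a \<in> S \<Longrightarrow> b \<in> S \<Longrightarrow> f \<circ> transpose a b permutes S"
  by (rule permutes_compose[OF permutes_swap_id])

lemma permutes_nat_permutation: "f permutes {1..(n::nat)} \<Longrightarrow> permutation f"
  using permutation_permutes by blast

lemma ncycles_eq_card_orbits:
  assumes "f permutes {1..n}"
  shows "ncycles n f = card (orbit f ` {1..n})"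
proof -
  have "{cyc f x | x. x \<in> {1..n}} = orbit f ` {1..n}"
    using cyc_eq_orbit[OF permutes_nat_permutation[OF assms]] by auto
  then show ?thesis unfolding ncycles_def by simp
qed

lemma ncycles_le: "f permutes {1..n} \<Longrightarrow> ncycles n f \<le> n"
  using ncycles_eq_card_orbits card_image_le[of "{1..n}" "orbit f"] by simp

lemma ncycles_join:
  assumes fp: "f permutes {1..n}" and ab: "a \<in> {1..n}" "b \<in> {1..n}" and nb: "b \<notin> orbit f a"
  shows "ncycles n (f \<circ> transpose a b) + 1 = ncycles n f"
proof -
  have pf: "permutation f" by (rule permutes_nat_permutation[OF fp])
  define A where "A = orbit f ` {1..n}"
  define Oa where "Oa = orbit f a"
  define Ob where "Ob = orbit f b"
  have self: "\<And>x. x \<in> orbit f x" by (rule permutation_self_in_orbit[OF pf])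
  have other: "x \<notin> Oa \<union> Ob \<longleftrightarrow> orbit f x \<notin> {Oa, Ob}" for x
    using self orbit_eq_if_mem[OF pf] unfolding Oa_def Ob_def by blast
  have "orbit (f \<circ> transpose a b) ` {1..n} = insert (Oa \<union> Ob) (A - {Oa, Ob})"
  proof (intro set_eqI iffI)
    fix X assume "X \<in> orbit (f \<circ> transpose a b) ` {1..n}"
    then show "X \<in> insert (Oa \<union> Ob) (A - {Oa, Ob})"
      using transpose_join_orbit_of[OF pf nb] other unfolding A_def Oa_def Ob_def by auto
  next
    fix X assume X: "X \<in> insert (Oa \<union> Ob) (A - {Oa, Ob})"
    have joined: "Oa \<union> Ob = orbit (f \<circ> transpose a b) a"
      using transpose_join_orbit_of[OF pf nb, of a] self unfolding Oa_def Ob_def by simp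
    have unchanged: "orbit f x = orbit (f \<circ> transpose a b) x" if "orbit f x \<notin> {Oa, Ob}" for x
    proof -
      have "x \<notin> Oa \<union> Ob" using that other by blast
      then show ?thesis using transpose_join_orbit_of[OF pf nb, of x] unfolding Oa_def Ob_def by simp
    qed
    show "X \<in> orbit (f \<circ> transpose a b) ` {1..n}"
    proof (cases "X = Oa \<union> Ob")
      case True
      then show ?thesis using joined ab(1) by blast
    next
      case False
      then have "X \<in> A" "X \<notin> {Oa, Ob}" using X by auto
      then obtain x where "x \<in> {1..n}" "X = orbit f x" "orbit f x \<notin> {Oa, Ob}"
        unfolding A_def by blast
      then show ?thesis using unchanged by (metis image_eqI)
    qed
  qed
  moreover have "Oa \<union> Ob \<notin> A - {Oa, Ob}"
    using other self unfolding A_def by (metis DiffD1 DiffD2 imageE Un_iff)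
  moreover have "Oa \<noteq> Ob" "Oa \<in> A" "Ob \<in> A" "finite A"
    using nb self ab unfolding A_def Oa_def Ob_def by auto
  moreover from this have "card {Oa, Ob} \<le> card A" by (intro card_mono) auto
  ultimately show ?thesis
    unfolding ncycles_eq_card_orbits[OF fp] A_def[symmetric]
      ncycles_eq_card_orbits[OF permutes_comp_transpose[OF fp ab]]
    by (simp add: card_Diff_subset card_mono)
qed

lemma plen_join:
  assumes fp: "f permutes {1..n}" and ab: "a \<in> {1..n}" "b \<in> {1..n}" and nb: "b \<notin> orbit f a"
  shows "plen n (f \<circ> transpose a b) = plen n f + 1"
  using ncycles_join[OF assms] ncycles_le[OF fp] unfolding plen_def by simp

lemma plen_split:
  assumes fp: "f permutes {1..n}" and ab: "a \<noteq> b" "a \<in> {1..n}" "b \<in> {1..n}"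
    and bin: "b \<in> orbit f a"
  shows "plen n f = plen n (f \<circ> transpose a b) + 1"
proof -
  have "b \<notin> orbit (f \<circ> transpose a b) a"
    by (rule transpose_separates[OF permutes_nat_permutation[OF fp] ab(1) bin])
  from plen_join[OF permutes_comp_transpose[OF fp ab(2,3)] ab(2,3) this]
  show ?thesis by (simp add: o_assoc[symmetric])
qed

lemma plen_comp_transpose_le:
  assumes "f permutes {1..n}" "a \<noteq> b" "a \<in> {1..n}" "b \<in> {1..n}"
  shows "plen n (f \<circ> transpose a b) \<le> plen n f + 1"
  using plen_join[OF assms(1,3,4)] plen_split[OF assms] by (cases "b \<in> orbit f a") auto

lemma plen_split_left:
  assumes fp: "f permutes {1..n}" and a: "a \<in> {1..n}" "f a \<noteq> a"
  shows "plen n f = plen n (transpose a (f a) \<circ> f) + 1"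
proof -
  have inv: "inv f (f a) = a" by (rule permutes_inverses(2)[OF fp])
  define c where "c = inv f a"
  have fc: "f c = a" unfolding c_def by (rule permutes_inverses(1)[OF fp])
  have c1: "c \<in> {1..n}" using a(1) fc permutes_not_in[OF fp, of c] by fastforce
  have "transpose a (f a) \<circ> f = f \<circ> transpose c a"
    using transpose_comp_eq[OF permutes_bij[OF fp], of a "f a"] inv unfolding c_def by simp
  moreover have "a \<in> orbit f c" using fc by (auto intro: orbit.base)
  moreover have "c \<noteq> a" using fc a(2) by auto
  ultimately show ?thesis using plen_split[OF fp _ c1 a(1)] by simp
qed

lemma plen_id: "plen n id = 0"
proof -
  have "orbit id ` {1..n} = (\<lambda>x. {x}) ` {1..n}"
    by (intro image_cong) (simp_all add: orbit_eq_singleton_iff)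
  moreover have "card ((\<lambda>x. {x}) ` {1..n}) = n" by (subst card_image) (auto intro: inj_onI)
  ultimately show ?thesis unfolding plen_def using ncycles_eq_card_orbits[OF permutes_id] by simp
qed

text \<open>Only the identity has length zero: all its orbits on \<open>{1..n}\<close> are distinct, and an orbit
  never changes along a step \<open>x \<mapsto> f x\<close>.\<close>
lemma plen_eq_0_imp_id:
  assumes fp: "f permutes {1..n}" and p0: "plen n f = 0"
  shows "f = id"
proof
  fix x
  have "card (orbit f ` {1..n}) = card {1..n}"
    using p0 ncycles_le[OF fp] ncycles_eq_card_orbits[OF fp] unfolding plen_def by simp
  then have inj: "inj_on (orbit f) {1..n}" by (simp add: eq_card_imp_inj_on)
  show "f x = id x"
  proof (cases "x \<in> {1..n}")
    case True
    moreover have "orbit f (f x) = orbit f x"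
      by (rule permutation_orbit_step[OF permutes_nat_permutation[OF fp]])
    ultimately show ?thesis using inj_onD[OF inj] permutes_in_image[OF fp] by simp
  next
    case False
    then show ?thesis using permutes_not_in[OF fp] by simp
  qed
qed

text \<open>Subadditivity \<open>|\<sigma> \<rho>| \<le> |\<sigma>| + |\<rho>|\<close>, by induction on \<open>|\<rho>|\<close>: peel off one transposition of \<open>\<rho>\<close>
  that splits one of its cycles.\<close>
lemma plen_comp_le:
  assumes "\<rho> permutes {1..n}" "\<sigma> permutes {1..n}"
  shows "plen n (\<sigma> \<circ> \<rho>) \<le> plen n \<sigma> + plen n \<rho>"
  using assms
proof (induction "plen n \<rho>" arbitrary: \<rho>)
  case 0
  then show ?case using plen_eq_0_imp_id by fastforce
next
  case (Suc m)
  then have "\<rho> \<noteq> id" using plen_id by force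
  then obtain a where a: "\<rho> a \<noteq> a" by (metis eq_id_iff)
  then have a1: "a \<in> {1..n}" using permutes_not_in[OF Suc.prems(1)] by blast
  define b where "b = \<rho> a"
  have b1: "b \<in> {1..n}" unfolding b_def using permutes_in_image[OF Suc.prems(1)] a1 by simp
  have ab: "a \<noteq> b" using a unfolding b_def by simp
  define \<rho>' where "\<rho>' = \<rho> \<circ> transpose a b"
  have \<rho>': "\<rho>' permutes {1..n}" unfolding \<rho>'_def by (rule permutes_comp_transpose[OF Suc.prems(1) a1 b1])
  have "plen n \<rho>' = m"
    using plen_split[OF Suc.prems(1) ab a1 b1] Suc.hyps(2) unfolding \<rho>'_def b_def
    by (simp add: orbit.base)
  then have IH: "plen n (\<sigma> \<circ> \<rho>') \<le> plen n \<sigma> + m" using Suc.hyps(1) \<rho>' Suc.prems(2) by blast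
  have "\<sigma> \<circ> \<rho> = (\<sigma> \<circ> \<rho>') \<circ> transpose a b" unfolding \<rho>'_def by (simp add: o_assoc[symmetric])
  then have "plen n (\<sigma> \<circ> \<rho>) \<le> plen n (\<sigma> \<circ> \<rho>') + 1"
    using plen_comp_transpose_le[OF permutes_compose[OF \<rho>' Suc.prems(2)] ab a1 b1] by simp
  then show ?case using IH Suc.hyps(2) by simp
qed

text \<open>A permutation of length \<open>n - 1\<close> is a single \<open>n\<close>-cycle, so a fixed point forces \<open>n = 1\<close>.\<close>
lemma plen_max_fixed_point:
  assumes fp: "f permutes {1..n}" and len: "plen n f = n - 1"
    and x: "x \<in> {1..n}" "f x = x" and y: "y \<in> {1..n}"
  shows "y = x"
proof -
  have "card (orbit f ` {1..n}) \<noteq> 0" using x by auto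
  then have "card (orbit f ` {1..n}) = 1"
    using len ncycles_le[OF fp] ncycles_eq_card_orbits[OF fp] unfolding plen_def by simp
  then have "orbit f y = orbit f x" using x y by (metis card_1_singletonE image_eqI singletonD)
  then show ?thesis
    using x permutation_self_in_orbit[OF permutes_nat_permutation[OF fp], of y]
    by (simp add: orbit_eq_singleton_iff[THEN iffD2])
qed

section \<open>Noncrossing permutations\<close>

text \<open>Place \<open>1, \<dots>, n\<close> clockwise on a circle. \<open>cbetween n x y z\<close> says that \<open>y\<close> lies on the open
  clockwise arc from \<open>x\<close> to \<open>z\<close>; for \<open>x = z\<close> this arc is the whole circle minus \<open>x\<close>.\<close>
definition cbetween :: "nat \<Rightarrow> nat \<Rightarrow> nat \<Rightarrow> nat \<Rightarrow> bool" where
  "cbetween n x y z \<longleftrightarrow> 1 \<le> y \<and> y \<le> n \<and>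
     (if x < z then x < y \<and> y < z else if z < x then x < y \<or> y < z else y \<noteq> x)"

text \<open>A permutation is noncrossing if it maps every arc from a point \<open>x\<close> to its image \<open>f x\<close>
  into itself; for permutations below the long cycle this says that its cycles, drawn as polygons,
  do not cross and are oriented clockwise.\<close>
definition noncrossing :: "nat \<Rightarrow> (nat \<Rightarrow> nat) \<Rightarrow> bool" where
  "noncrossing n f \<longleftrightarrow> (\<forall>x\<in>{1..n}. \<forall>y. cbetween n x y (f x) \<longrightarrow> cbetween n x (f y) (f x))"

definition cdist :: "nat \<Rightarrow> nat \<Rightarrow> nat \<Rightarrow> nat" where
  "cdist n x y = (if x \<le> y then y - x else n + y - x)"

lemma cbetween_in: "cbetween n x y z \<Longrightarrow> y \<in> {1..n}"
  unfolding cbetween_def by simp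

lemma cbetween_neq: "cbetween n x y z \<Longrightarrow> y \<noteq> x"
  unfolding cbetween_def by (auto split: if_split_asm)

lemma cbetween_whole_circle: "y \<in> {1..n} \<Longrightarrow> y \<noteq> x \<Longrightarrow> cbetween n x y x"
  unfolding cbetween_def by simp

lemma orbit_in_domain:
  assumes "f permutes {1..n}" "x \<in> {1..n}" "y \<in> orbit f x"
  shows "y \<in> {1..n}"
  using permutes_orbit_subset[OF assms(1,2)] assms(3) by blast

text \<open>For a noncrossing \<open>f\<close> the arc from \<open>x\<close> to \<open>f x\<close> is a union of cycles, so the cycle of
  \<open>x\<close> lies outside of it \<dots>\<close>
lemma noncrossing_orbit_outside_arc:
  assumes fp: "f permutes {1..n}" and nc: "noncrossing n f" and x: "x \<in> {1..n}"
    and z: "z \<in> orbit f x"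
  shows "\<not> cbetween n x z (f x)"
proof -
  define I where "I = {y. cbetween n x y (f x)}"
  have "finite I" using finite_subset[of I "{1..n}"] cbetween_in unfolding I_def by blast
  moreover have "f ` I \<subseteq> I" using nc x unfolding I_def noncrossing_def by blast
  ultimately have fI: "f ` I = I" using endo_inj_surj permutes_inj_on[OF fp] by blast
  have "f y \<in> {1..n} - I" if "y \<in> {1..n} - I" for y
    using that fI permutes_in_image[OF fp] permutes_inj[OF fp] by (auto dest: injD)
  moreover have "x \<in> {1..n} - I" using x cbetween_neq unfolding I_def by blast
  ultimately have "orbit f x \<subseteq> {1..n} - I" by (intro orbit_subset_invariant)
  then show ?thesis using z unfolding I_def by blast
qed

lemma noncrossing_orbit_inside_arc:
  assumes nc: "noncrossing n f" and x: "x \<in> {1..n}" and y: "cbetween n x y (f x)"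
  shows "orbit f y \<subseteq> {w. cbetween n x w (f x)}"
  using y nc x unfolding noncrossing_def by (intro orbit_subset_invariant) auto

text \<open>A point \<open>y\<close> off the cycle of \<open>x\<close> lies on the arc of some step \<open>z \<mapsto> f z\<close> of that cycle:
  take \<open>z\<close> on the cycle closest to \<open>y\<close> counter-clockwise.\<close>
lemma orbit_gap:
  assumes fp: "f permutes {1..n}" and x: "x \<in> {1..n}" and y: "y \<in> {1..n}"
    and ny: "y \<notin> orbit f x"
  shows "\<exists>z\<in>orbit f x. cbetween n z y (f z)"
proof -
  have "x \<in> orbit f x" by (rule permutation_self_in_orbit[OF permutes_nat_permutation[OF fp]])
  then obtain z where z: "z \<in> orbit f x"
    and closest: "\<And>w. w \<in> orbit f x \<Longrightarrow> cdist n z y \<le> cdist n w y"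
    using ex_has_least_nat[of "\<lambda>w. w \<in> orbit f x" x "\<lambda>w. cdist n w y"] by blast
  have fz: "f z \<in> orbit f x" using orbit.step[OF z] .
  have z1: "z \<in> {1..n}" and fz1: "f z \<in> {1..n}"
    using orbit_in_domain[OF fp x] z fz by auto
  have "z \<noteq> y" "f z \<noteq> y" using z fz ny by auto
  have "cbetween n z y (f z)"
  proof (cases "f z = z")
    case True
    then show ?thesis using cbetween_whole_circle y \<open>z \<noteq> y\<close> by simp
  next
    case False
    have "cdist n z y \<le> cdist n (f z) y" by (rule closest[OF fz])
    then show ?thesis
      using False z1 fz1 y \<open>z \<noteq> y\<close> \<open>f z \<noteq> y\<close> unfolding cbetween_def cdist_def
      by (auto split: if_split_asm)
  qed
  then show ?thesis using z by blast
qed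

text \<open>Let \<open>f\<close> be noncrossing and \<open>a \<noteq> b\<close> on one cycle of \<open>f\<close>. The next two lemmas show that the arc
  from \<open>a\<close> to \<open>(f \<circ> (a b)) a = f b\<close> is mapped into itself by \<open>f \<circ> (a b)\<close>; first for the point \<open>b\<close>,
  which is sent to \<open>f a\<close>.\<close>
lemma noncrossing_split_arc_image_b:
  assumes fp: "f permutes {1..n}" and nc: "noncrossing n f"
    and ab: "a \<noteq> b" "a \<in> {1..n}" and bin: "b \<in> orbit f a"
  shows "cbetween n a (f a) (f b)"
proof -
  have "f a \<noteq> a" using bin ab(1) orbit_eq_singleton_iff[of f a] by auto
  moreover have "f a \<noteq> f b" using ab(1) permutes_inj[OF fp] by (auto dest: injD)
  moreover have "\<not> cbetween n a (f b) (f a)"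
    by (rule noncrossing_orbit_outside_arc[OF fp nc ab(2) orbit.step[OF bin]])
  moreover have "f a \<in> {1..n}" "f b \<in> {1..n}"
    using permutes_in_image[OF fp] ab(2) orbit_in_domain[OF fp ab(2) bin] by auto
  ultimately show ?thesis using ab(2) unfolding cbetween_def by (auto split: if_split_asm)
qed

text \<open>The remaining points of the arc are moved by \<open>f\<close> itself. If the arc is not the whole circle,
  it contains \<open>b\<close>, and we distinguish whether \<open>y\<close> lies beyond \<open>b\<close>, on the cycle of \<open>a\<close> before \<open>b\<close>,
  or on another cycle (which then sits inside one step of the cycle of \<open>a\<close>).\<close>
lemma noncrossing_split_arc_image_other:
  assumes fp: "f permutes {1..n}" and nc: "noncrossing n f"
    and ab: "a \<noteq> b" "a \<in> {1..n}" "b \<in> {1..n}" and bin: "b \<in> orbit f a"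
    and y: "cbetween n a y (f b)" and yb: "y \<noteq> b"
  shows "cbetween n a (f y) (f b)"
proof -
  have pf: "permutation f" by (rule permutes_nat_permutation[OF fp])
  have self: "\<And>x. x \<in> orbit f x" by (rule permutation_self_in_orbit[OF pf])
  have ain: "a \<in> orbit f b" using orbit_swap[OF self bin] .
  have y1: "y \<in> {1..n}" and ya: "y \<noteq> a" using cbetween_in[OF y] cbetween_neq[OF y] by auto
  have fy: "f y \<in> {1..n}" "f b \<in> {1..n}" using permutes_in_image[OF fp] y1 ab(3) by auto
  show ?thesis
  proof (cases "f b = a")
    case True
    have "f y \<noteq> f b" using yb permutes_inj[OF fp] by (auto dest: injD)
    then show ?thesis using True fy cbetween_whole_circle by simp
  next
    case sa: False
    have "f b \<noteq> b" using ain ab(1) orbit_eq_singleton_iff[of f b] by auto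
    moreover have "\<not> cbetween n b a (f b)" by (rule noncrossing_orbit_outside_arc[OF fp nc ab(3) ain])
    ultimately have ab_s: "cbetween n a b (f b)"
      using sa ab fy(2) unfolding cbetween_def by (auto split: if_split_asm)
    have "cbetween n b y (f b) \<or> cbetween n a y b"
      using y yb ab_s ab(2,3) sa unfolding cbetween_def by (auto split: if_split_asm)
    then consider (beyond_b) "cbetween n b y (f b)" | (before_b) "cbetween n a y b" by blast
    then show ?thesis
    proof cases
      case beyond_b
      then have "cbetween n b (f y) (f b)" using nc ab(3) unfolding noncrossing_def by blast
      then show ?thesis using ab_s ab(2,3) unfolding cbetween_def by (auto split: if_split_asm)
    next
      case before_b
      show ?thesis
      proof (cases "y \<in> orbit f a")
        case True
        then have "b \<in> orbit f y" using orbit_eq_if_mem[OF pf True] bin by simp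
        then have "\<not> cbetween n y b (f y)" by (rule noncrossing_orbit_outside_arc[OF fp nc y1])
        moreover have "f y \<noteq> y"
          using True ya self[of a] orbit_eq_if_mem[OF pf True] orbit_eq_singleton_iff[of f y] by auto
        ultimately show ?thesis
          using before_b ab_s fy ab(2,3) unfolding cbetween_def by (auto split: if_split_asm)
      next
        case False
        then obtain z where z: "z \<in> orbit f a" "cbetween n z y (f z)"
          using orbit_gap[OF fp ab(2) y1] by blast
        have z1: "z \<in> {1..n}" using orbit_in_domain[OF fp ab(2) z(1)] .
        have oz: "orbit f z = orbit f a" by (rule orbit_eq_if_mem[OF pf z(1)])
        have "cbetween n z (f y) (f z)" using nc z1 z(2) unfolding noncrossing_def by blast
        moreover have "\<not> cbetween n z a (f z)" "\<not> cbetween n z b (f z)"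
          using noncrossing_orbit_outside_arc[OF fp nc z1] oz self bin by auto
        moreover have "f z \<in> {1..n}" using permutes_in_image[OF fp] z1 by simp
        ultimately show ?thesis
          using before_b z(2) ab ab_s z1 unfolding cbetween_def by (auto split: if_split_asm)
      qed
    qed
  qed
qed

text \<open>For arcs starting at
  \<open>a\<close> or \<open>b\<close> this is the content of the two lemmas above; any other arc \<open>(x, f x)\<close> contains
  either the whole cycle of \<open>a\<close> and \<open>b\<close> or none of it.\<close>
lemma noncrossing_split:
  assumes fp: "f permutes {1..n}" and nc: "noncrossing n f"
    and ab: "a \<noteq> b" "a \<in> {1..n}" "b \<in> {1..n}" and bin: "b \<in> orbit f a"
  shows "noncrossing n (f \<circ> transpose a b)"
proof -
  have pf: "permutation f" by (rule permutes_nat_permutation[OF fp])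
  have ain: "a \<in> orbit f b" using orbit_swap[OF permutation_self_in_orbit[OF pf] bin] .
  have from_a: "cbetween n a ((f \<circ> transpose a b) y) ((f \<circ> transpose a b) a)"
    if "cbetween n a y ((f \<circ> transpose a b) a)"
      and "a \<noteq> b" "a \<in> {1..n}" "b \<in> {1..n}" "b \<in> orbit f a" for a b y
    using that cbetween_neq[OF that(1)] noncrossing_split_arc_image_b[OF fp nc]
      noncrossing_split_arc_image_other[OF fp nc]
    by (cases "y = b") auto
  show ?thesis
    unfolding noncrossing_def
  proof (intro ballI allI impI)
    fix x y assume x: "x \<in> {1..n}" and y: "cbetween n x y ((f \<circ> transpose a b) x)"
    consider "x = a" | "x = b" | "x \<noteq> a" "x \<noteq> b" by blast
    then show "cbetween n x ((f \<circ> transpose a b) y) ((f \<circ> transpose a b) x)"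
    proof cases
      case 1
      then show ?thesis using from_a[OF _ ab bin] y by simp
    next
      case 2
      then show ?thesis
        using from_a[of b y a] ab ain y by (simp add: transpose_commute)
    next
      case 3
      then have y': "cbetween n x y (f x)" using y by simp
      have "cbetween n x ((f \<circ> transpose a b) y) (f x)"
      proof (cases "y \<in> {a, b}")
        case True
        then have "orbit f y = orbit f a"
          using orbit_eq_if_mem[OF pf bin] permutation_self_in_orbit[OF pf, of a] by auto
        moreover have "(f \<circ> transpose a b) y \<in> orbit f a"
          using True orbit.base[of f a] orbit.step[OF bin] by auto
        ultimately show ?thesis using noncrossing_orbit_inside_arc[OF nc x y'] by auto
      next
        case False
        then show ?thesis using nc x y' unfolding noncrossing_def by simp
      qed
      then show ?thesis using 3 by simp
    qed
  qed
qed

lemma longcyc_permutes: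
  assumes n: "n \<ge> 1"
  shows "longcyc n permutes {1..n}"
proof (rule bij_imp_permutes)
  have inj: "inj_on (longcyc n) {1..n}"
    by (rule inj_onI) (auto simp: longcyc_def split: if_split_asm)
  have "longcyc n ` {1..n} \<subseteq> {1..n}" using n by (auto simp: longcyc_def)
  then have "longcyc n ` {1..n} = {1..n}" using endo_inj_surj[OF _ _ inj] by simp
  then show "bij_betw (longcyc n) {1..n} {1..n}" using inj unfolding bij_betw_def by simp
  show "\<And>x. x \<notin> {1..n} \<Longrightarrow> longcyc n x = x" using n by (auto simp: longcyc_def)
qed

lemma noncrossing_longcyc: "noncrossing n (longcyc n)"
  unfolding noncrossing_def cbetween_def longcyc_def by (auto split: if_split_asm)

text \<open>Induction on the distance
  \<open>|\<sigma>\<^sup>-\<^sup>1 c|\<close> to the long cycle \<open>c\<close>: pick consecutive points \<open>a\<close>, \<open>b\<close> of a cycle of \<open>\<sigma>\<^sup>-\<^sup>1 c\<close>. By the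
  geodesic condition \<open>(a b)\<close> joins two cycles of \<open>\<sigma>\<close>, and \<open>\<sigma> (a b)\<close> is again below \<open>c\<close>, one step
  closer; \<open>\<sigma>\<close> arises from it by splitting a cycle, which preserves noncrossingness.\<close>
lemma below_longcyc_noncrossing:
  assumes n: "n \<ge> 1" and sp: "\<sigma> permutes {1..n}" and below: "pleq n \<sigma> (longcyc n)"
  shows "noncrossing n \<sigma>"
  using sp below unfolding pleq_def
proof (induction "plen n (inv \<sigma> \<circ> longcyc n)" arbitrary: \<sigma>)
  case 0
  have "inv \<sigma> \<circ> longcyc n = id"
    using plen_eq_0_imp_id[OF permutes_compose[OF longcyc_permutes[OF n] permutes_inv[OF 0(2)]]]
      0(1) by simp
  then have "\<sigma> \<circ> (inv \<sigma> \<circ> longcyc n) = \<sigma>" by simp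
  then have "longcyc n = \<sigma>" using permutes_inv_o(1)[OF 0(2)] by (simp add: o_assoc)
  then show ?case using noncrossing_longcyc by metis
next
  case (Suc d)
  define \<delta> where "\<delta> = inv \<sigma> \<circ> longcyc n"
  have dp: "\<delta> permutes {1..n}"
    unfolding \<delta>_def by (rule permutes_compose[OF longcyc_permutes[OF n] permutes_inv[OF Suc.prems(1)]])
  have "\<delta> \<noteq> id" using Suc.hyps(2) plen_id unfolding \<delta>_def by force
  then obtain a where a: "\<delta> a \<noteq> a" by (metis eq_id_iff)
  define b where "b = \<delta> a"
  have a1: "a \<in> {1..n}" using a permutes_not_in[OF dp] by blast
  have b1: "b \<in> {1..n}" unfolding b_def using permutes_in_image[OF dp] a1 by simp
  have ab: "a \<noteq> b" using a unfolding b_def by simp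
  define \<sigma>' where "\<sigma>' = \<sigma> \<circ> transpose a b"
  have sp': "\<sigma>' permutes {1..n}" unfolding \<sigma>'_def by (rule permutes_comp_transpose[OF Suc.prems(1) a1 b1])
  have "inv \<sigma>' = transpose a b \<circ> inv \<sigma>"
    unfolding \<sigma>'_def by (simp add: o_inv_distrib[OF permutes_bij[OF Suc.prems(1)] bij_transpose])
  then have dist': "inv \<sigma>' \<circ> longcyc n = transpose a b \<circ> \<delta>" unfolding \<delta>_def by (simp add: o_assoc)
  have "Suc d = plen n \<delta>" using Suc.hyps(2) unfolding \<delta>_def .
  then have d: "plen n (transpose a b \<circ> \<delta>) = d" using plen_split_left[OF dp a1 a] unfolding b_def by simp
  show ?case
  proof (cases "b \<in> orbit \<sigma> a")
    case False
    have "plen n \<sigma>' = plen n \<sigma> + 1" unfolding \<sigma>'_def by (rule plen_join[OF Suc.prems(1) a1 b1 False])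
    then have "plen n (longcyc n) = plen n \<sigma>' + plen n (inv \<sigma>' \<circ> longcyc n)"
      using Suc.prems(2) Suc.hyps(2) dist' d by simp
    then have "noncrossing n \<sigma>'" using Suc.hyps(1)[OF _ sp'] dist' d by simp
    moreover have "b \<in> orbit \<sigma>' a"
      unfolding \<sigma>'_def by (rule transpose_joins[OF permutes_nat_permutation[OF Suc.prems(1)] False])
    ultimately have "noncrossing n (\<sigma>' \<circ> transpose a b)" using noncrossing_split[OF sp' _ ab a1 b1] by blast
    then show ?thesis unfolding \<sigma>'_def by (simp add: o_assoc[symmetric])
  next
    case True
    have "plen n \<sigma> = plen n \<sigma>' + 1" unfolding \<sigma>'_def by (rule plen_split[OF Suc.prems(1) ab a1 b1 True])
    moreover have "\<sigma>' \<circ> (transpose a b \<circ> \<delta>) = longcyc n"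
      unfolding dist'[symmetric] using permutes_inv_o(1)[OF sp'] by (simp add: o_assoc)
    then have "plen n (longcyc n) \<le> plen n \<sigma>' + d"
      using plen_comp_le[OF permutes_compose[OF dp permutes_swap_id[OF a1 b1]] sp'] d by simp
    ultimately show ?thesis using Suc.prems(2) Suc.hyps(2) by simp
  qed
qed

section \<open>Joining two cycles of a noncrossing permutation\<close>

text \<open>The situation of a single step \<open>\<gamma>\<^sub>l = \<gamma>\<^sub>l\<^sub>-\<^sub>1 (i j)\<close> of a geodesic chain: \<open>(i j)\<close> joins two
  cycles, and the permutations before and after the step are both noncrossing.\<close>
locale noncrossing_join =
  fixes n :: nat and f :: "nat \<Rightarrow> nat" and i j :: nat
  assumes permutes: "f permutes {1..n}"
    and noncrossing_before: "noncrossing n f"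
    and noncrossing_after: "noncrossing n (f \<circ> transpose i j)"
    and bounds: "1 \<le> i" "i < j" "j \<le> n"
    and joins: "j \<notin> orbit f i"
begin

lemma perm: "permutation f"
  by (rule permutes_nat_permutation[OF permutes])

lemma self_in_orbit: "x \<in> orbit f x"
  by (rule permutation_self_in_orbit[OF perm])

lemma finite_orbit_of: "x \<in> {1..n} \<Longrightarrow> finite (orbit f x)"
  using finite_subset[OF permutes_orbit_subset[OF permutes]] by blast

text \<open>After the step, \<open>i\<close> is mapped to \<open>f j\<close>, so its new cycle avoids the arc from \<open>i\<close> to \<open>f j\<close>.\<close>
lemma joined_orbit_outside_arc:
  assumes "z \<in> orbit (f \<circ> transpose i j) i"
  shows "\<not> cbetween n i z (f j)"
proof -
  have "\<not> cbetween n i z ((f \<circ> transpose i j) i)"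
    using bounds assms by (intro noncrossing_orbit_outside_arc[OF permutes_comp_transpose[OF permutes]
          noncrossing_after]) auto
  then show ?thesis by simp
qed

text \<open>In particular \<open>i < f j \<le> j\<close>, since \<open>j\<close> is on the new cycle of \<open>i\<close>.\<close>
lemma image_j_bounds: "i < f j \<and> f j \<le> j"
proof -
  have "\<not> cbetween n i j (f j)"
    by (rule joined_orbit_outside_arc[OF transpose_joins[OF perm joins]])
  moreover have "f j \<in> {1..n}" using permutes_in_image[OF permutes] bounds by simp
  ultimately show ?thesis using bounds unfolding cbetween_def by (auto split: if_split_asm)
qed

text \<open>The cycle of \<open>j\<close> lies in \<open>[f j, j]\<close>: it avoids the arc from \<open>j\<close> to \<open>f j\<close>.\<close>
lemma orbit_j_bounds:
  assumes x: "x \<in> orbit f j"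
  shows "f j \<le> x \<and> x \<le> j"
proof (cases "f j = j")
  case True
  then show ?thesis using x orbit_eq_singleton_iff[of f j] by auto
next
  case False
  have "\<not> cbetween n j x (f j)"
    using bounds by (intro noncrossing_orbit_outside_arc[OF permutes noncrossing_before _ x]) auto
  moreover have "x \<in> {1..n}" using orbit_in_domain[OF permutes _ x] bounds by auto
  ultimately show ?thesis using False image_j_bounds bounds unfolding cbetween_def
    by (auto split: if_split_asm)
qed

lemma orbit_j_above_i: "x \<in> orbit f j \<Longrightarrow> i < x"
  using orbit_j_bounds image_j_bounds by fastforce

lemma Max_orbit_j: "Max (orbit f j) = j"
  using orbit_j_bounds self_in_orbit bounds by (intro Max_eqI finite_orbit_of) auto

text \<open>\<open>i\<close> is the largest point of its cycle below the whole cycle of \<open>j\<close>: a larger such point would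
  lie on the arc from \<open>i\<close> to \<open>f j\<close>, but it is on the joined cycle of \<open>i\<close>.\<close>
lemma i_largest_below:
  assumes y: "y \<in> orbit f i" and below: "\<forall>x\<in>orbit f j. y < x"
  shows "y \<le> i"
proof (rule ccontr)
  assume "\<not> y \<le> i"
  moreover have "y < f j" using below orbit.base[of f j] by blast
  moreover have "y \<in> {1..n}" using orbit_in_domain[OF permutes _ y] bounds by auto
  ultimately have "cbetween n i y (f j)"
    using image_j_bounds unfolding cbetween_def by auto
  moreover have "y \<in> orbit (f \<circ> transpose i j) i"
    using y transpose_join_orbits(1)[OF perm joins] by simp
  ultimately show False using joined_orbit_outside_arc by blast
qed

text \<open>Also the cycle of \<open>i + 1\<close> lies above \<open>i\<close>: either it is the cycle of \<open>j\<close>, or \<open>i + 1\<close> lies on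
  the arc from \<open>i\<close> to \<open>f j\<close>, which the new permutation, and hence \<open>f\<close>, maps into itself.\<close>
lemma orbit_succ_above_i:
  assumes x: "x \<in> orbit f (i + 1)"
  shows "i < x"
proof (cases "i + 1 \<in> orbit f j")
  case True
  then show ?thesis using x orbit_eq_if_mem[OF perm True] orbit_j_above_i by simp
next
  case False
  define I where "I = {w. cbetween n i w (f j)}"
  have "i + 1 \<noteq> f j" using False orbit.base[of f j] by auto
  then have "i + 1 \<in> I" using image_j_bounds bounds unfolding I_def cbetween_def by auto
  moreover have "f w \<in> I" if "w \<in> I" for w
  proof -
    have "w \<noteq> i" "w \<noteq> j"
      using that cbetween_neq image_j_bounds unfolding I_def cbetween_def by auto
    moreover have "cbetween n i ((f \<circ> transpose i j) w) ((f \<circ> transpose i j) i)"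
      if "cbetween n i w ((f \<circ> transpose i j) i)"
    proof -
      have "i \<in> {1..n}" using bounds by simp
      then show ?thesis using noncrossing_after that unfolding noncrossing_def by blast
    qed
    ultimately show ?thesis using that unfolding I_def by simp
  qed
  ultimately have "orbit f (i + 1) \<subseteq> I" by (rule orbit_subset_invariant)
  then show ?thesis using x image_j_bounds unfolding I_def cbetween_def by auto
qed

text \<open>Otherwise \<open>j = p + 1\<close>, so the new image of \<open>i\<close> is \<open>p + 1\<close> and the
  new cycle of \<open>p\<close>, containing \<open>q\<close>, would have to stay on the arc from \<open>i\<close> to \<open>p + 1\<close>.\<close>
lemma keeps_fixed_successor:
  assumes ip: "i < p" and pq: "p + 1 < q" and fixed: "f (p + 1) = p + 1" and q: "q \<in> orbit f p"
  shows "(f \<circ> transpose i j) (p + 1) = p + 1 \<and> q \<in> orbit (f \<circ> transpose i j) p"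
proof
  show q': "q \<in> orbit (f \<circ> transpose i j) p"
    using transpose_join_orbit_mono[OF perm joins] q by blast
  have "j \<noteq> p + 1"
  proof
    assume j: "j = p + 1"
    then have "cbetween n i p ((f \<circ> transpose i j) i)"
      using fixed ip bounds unfolding cbetween_def by auto
    then have "orbit (f \<circ> transpose i j) p \<subseteq> {w. cbetween n i w ((f \<circ> transpose i j) i)}"
      using bounds by (intro noncrossing_orbit_inside_arc[OF noncrossing_after]) auto
    then have "cbetween n i q (p + 1)" using q' fixed j by auto
    then show False using pq ip unfolding cbetween_def by auto
  qed
  then show "(f \<circ> transpose i j) (p + 1) = p + 1" using fixed ip by simp
qed

lemma Min_joined_orbit: "Min (orbit f i \<union> orbit f j) = Min (orbit f i)"
proof -
  have fin: "finite (orbit f i)" "finite (orbit f j)" using finite_orbit_of bounds by auto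
  have "Min (orbit f j) \<in> orbit f j" using fin orbit_nonempty[of f j] by (intro Min_in)
  then have "i < Min (orbit f j)" by (rule orbit_j_above_i)
  moreover have "Min (orbit f i) \<le> i" using fin self_in_orbit by auto
  ultimately have "Min (orbit f i) \<le> Min (orbit f j)" by linarith
  then show ?thesis
    using Min_Un[OF fin(1) orbit_nonempty fin(2) orbit_nonempty] by (simp add: min.absorb1)
qed

end

section \<open>Geodesic chains of transpositions\<close>

lemma gpref_0: "gpref g 0 = id"
  unfolding gpref_def tprod_def by simp

lemma gpref_Suc:
  assumes "m < length g"
  shows "gpref g (Suc m) = gpref g m \<circ> transpose (fst (g ! m)) (snd (g ! m))"
proof -
  have comp: "foldr (\<lambda>t acc. transpose (fst t) (snd t) \<circ> acc) ts h
      = foldr (\<lambda>t acc. transpose (fst t) (snd t) \<circ> acc) ts id \<circ> h" for ts h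
    by (induction ts) (simp_all add: o_assoc)
  have "take (Suc m) g = take m g @ [g ! m]" using assms by (simp add: take_Suc_conv_app_nth)
  then show ?thesis unfolding gpref_def tprod_def by (simp add: comp[of _ "transpose _ _"])
qed

text \<open>A chain \<open>\<gamma> \<in> \<Sigma>\<^sub>n(k)\<close>, with \<open>lo m\<close> and \<open>hi m\<close> the two points of its transposition number
  \<open>m\<close> (counted from \<open>0\<close>) and \<open>gam m = \<gamma>\<^sub>m\<close> its prefix products.\<close>
locale geodesic_chain =
  fixes n k :: nat and g :: "(nat \<times> nat) list"
  assumes n_pos: "n \<ge> 1" and chain: "g \<in> Sigma_n n k"
begin

abbreviation lo :: "nat \<Rightarrow> nat" where "lo m \<equiv> fst (g ! m)"
abbreviation hi :: "nat \<Rightarrow> nat" where "hi m \<equiv> snd (g ! m)"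
abbreviation gam :: "nat \<Rightarrow> nat \<Rightarrow> nat" where "gam m \<equiv> gpref g m"

lemma length_g: "length g = k"
  using chain unfolding Sigma_n_def by simp

lemma transp_bounds: "m < k \<Longrightarrow> 1 \<le> lo m \<and> lo m < hi m \<and> hi m \<le> n"
  using chain nth_mem[of m g] length_g unfolding Sigma_n_def valid_transp_def by auto

lemma gam_Suc: "m < k \<Longrightarrow> gam (Suc m) = gam m \<circ> transpose (lo m) (hi m)"
  using gpref_Suc length_g by simp

lemma gam_permutes: "m \<le> k \<Longrightarrow> gam m permutes {1..n}"
proof (induction m)
  case 0
  show ?case unfolding gpref_0 by (rule permutes_id)
next
  case (Suc m)
  then have m: "m < k" by simp
  show ?case unfolding gam_Suc[OF m]
    by (rule permutes_comp_transpose[OF Suc.IH]) (use m transp_bounds[OF m] in auto)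
qed

lemma plen_gam_k: "plen n (gam k) = k"
  using chain length_g unfolding Sigma_n_def gpref_def by simp

lemma plen_gam_increase_le:
  "m \<le> m' \<Longrightarrow> m' \<le> k \<Longrightarrow> plen n (gam m') \<le> plen n (gam m) + (m' - m)"
proof (induction m' rule: dec_induct)
  case base
  then show ?case by simp
next
  case (step q)
  then have q: "q < k" by simp
  have "plen n (gam (Suc q)) \<le> plen n (gam q) + 1"
    using plen_comp_transpose_le[OF gam_permutes] gam_Suc[OF q] transp_bounds[OF q] q by simp
  then show ?case using step by simp
qed

text \<open>Since the length grows from \<open>0\<close> to \<open>k\<close> in \<open>k\<close> steps, every step joins two cycles.\<close>
lemma step_joins: "m < k \<Longrightarrow> hi m \<notin> orbit (gam m) (lo m)"
proof
  assume m: "m < k" and split: "hi m \<in> orbit (gam m) (lo m)"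
  have "plen n (gam m) = plen n (gam (Suc m)) + 1"
    using plen_split[OF gam_permutes _ _ _ split] m transp_bounds[OF m] gam_Suc[OF m] by simp
  moreover have "plen n (gam m) \<le> m" using plen_gam_increase_le[of 0 m] m by (simp add: gpref_0 plen_id)
  moreover have "plen n (gam k) \<le> plen n (gam (Suc m)) + (k - Suc m)"
    using plen_gam_increase_le[of "Suc m" k] m by simp
  ultimately show False using plen_gam_k m by simp
qed

text \<open>All prefix products are noncrossing: \<open>\<gamma>\<^sub>k\<close> is below the long cycle, and going backwards
  each \<open>\<gamma>\<^sub>m\<close> arises from \<open>\<gamma>\<^sub>m\<^sub>+\<^sub>1\<close> by splitting a cycle.\<close>
lemma gam_noncrossing: "m \<le> k \<Longrightarrow> noncrossing n (gam m)"
proof (induction m rule: inc_induct)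
  case base
  have "gam k = tprod g" using length_g unfolding gpref_def by simp
  then show ?case
    using below_longcyc_noncrossing[OF n_pos gam_permutes[of k]] chain unfolding Sigma_n_def by simp
next
  case (step m)
  have "hi m \<in> orbit (gam (Suc m)) (lo m)"
    using transpose_joins[OF permutes_nat_permutation[OF gam_permutes] step_joins] step gam_Suc
    by simp
  then have "noncrossing n (gam (Suc m) \<circ> transpose (lo m) (hi m))"
    using noncrossing_split[OF gam_permutes step.IH] transp_bounds[of m] step by simp
  then show ?case using gam_Suc[of m] step by (simp add: o_assoc[symmetric])
qed

lemma step_noncrossing_join: "m < k \<Longrightarrow> noncrossing_join n (gam m) (lo m) (hi m)"
  unfolding noncrossing_join_def
  using gam_permutes gam_noncrossing[of m] gam_noncrossing[of "Suc m"] gam_Suc transp_bounds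
    step_joins
  by simp

text \<open>The minimum of every nontrivial cycle of \<open>\<gamma>\<^sub>m\<close> is one of the points \<open>lo 0, \<dots>, lo (m - 1)\<close>:
  a joined cycle keeps the minimum of the cycle of \<open>lo m\<close>.\<close>
lemma Min_orbit_in_lo:
  "m \<le> k \<Longrightarrow> x \<in> {1..n} \<Longrightarrow> gam m x \<noteq> x \<Longrightarrow> Min (orbit (gam m) x) \<in> lo ` {..<m}"
proof (induction m arbitrary: x)
  case 0
  then show ?case by (simp add: gpref_0)
next
  case (Suc m)
  then have m: "m < k" by simp
  interpret J: noncrossing_join n "gam m" "lo m" "hi m" by (rule step_noncrossing_join[OF m])
  have earlier: "lo ` {..<m} \<subseteq> lo ` {..<Suc m}" by auto
  show ?case
  proof (cases "x \<in> orbit (gam m) (lo m) \<union> orbit (gam m) (hi m)")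
    case True
    then have "Min (orbit (gam (Suc m)) x) = Min (orbit (gam m) (lo m))"
      using transpose_join_orbit_of[OF J.perm J.joins] J.Min_joined_orbit gam_Suc[OF m] by simp
    moreover have "Min (orbit (gam m) (lo m)) \<in> lo ` {..<Suc m}"
    proof (cases "gam m (lo m) = lo m")
      case True
      then show ?thesis using orbit_eq_singleton_iff[of "gam m" "lo m"] by simp
    next
      case False
      then show ?thesis using Suc.IH[of "lo m"] J.bounds m earlier by auto
    qed
    ultimately show ?thesis by simp
  next
    case False
    then have "x \<noteq> lo m" "x \<noteq> hi m" using J.self_in_orbit by auto
    then have "gam m x \<noteq> x" using Suc.prems gam_Suc[OF m] by simp
    moreover have "orbit (gam (Suc m)) x = orbit (gam m) x"
      using transpose_join_orbit_of[OF J.perm J.joins, of x] False gam_Suc[OF m] by simp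
    ultimately show ?thesis using Suc.IH[of x] Suc.prems(2) m earlier by auto
  qed
qed

text \<open>Part 4: if \<open>lo m + 1\<close> is not among the earlier \<open>lo\<close>'s, it is a fixed point of \<open>\<gamma>\<^sub>m\<close>, since its
  cycle lies above \<open>lo m\<close> and so would have minimum \<open>lo m + 1\<close>.\<close>
lemma succ_lo_fixed:
  assumes m: "m < k" and new: "lo m + 1 \<notin> lo ` {..<m}"
  shows "orbit (gam m) (lo m + 1) = {lo m + 1}"
proof (rule ccontr)
  interpret J: noncrossing_join n "gam m" "lo m" "hi m" by (rule step_noncrossing_join[OF m])
  have succ: "lo m + 1 \<in> {1..n}" using J.bounds by simp
  assume "orbit (gam m) (lo m + 1) \<noteq> {lo m + 1}"
  then have "Min (orbit (gam m) (lo m + 1)) \<in> lo ` {..<m}"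
    using Min_orbit_in_lo[of m] m succ orbit_eq_singleton_iff by (metis less_imp_le)
  moreover have "Min (orbit (gam m) (lo m + 1)) = lo m + 1"
    using J.orbit_succ_above_i J.self_in_orbit J.finite_orbit_of[OF succ]
    by (intro Min_eqI) (auto simp: Suc_le_eq)
  ultimately show False using new by simp
qed

text \<open>Otherwise \<open>lo m + 1\<close> would be fixed by \<open>\<gamma>\<^sub>m\<close>, stay fixed in every later
  step (all of them have smaller \<open>lo\<close>), and so be a fixed point of the \<open>n\<close>-cycle \<open>\<gamma>\<^sub>k\<close>.\<close>
lemma last_max_step_adjacent:
  assumes kn: "k = n - 1" and m: "m < k"
    and lo_max: "\<And>m'. m' < k \<Longrightarrow> lo m' \<le> lo m"
    and last: "\<And>m'. m' < k \<Longrightarrow> lo m' = lo m \<Longrightarrow> m' \<le> m"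
  shows "hi m = lo m + 1"
proof (rule ccontr)
  interpret J: noncrossing_join n "gam m" "lo m" "hi m" by (rule step_noncrossing_join[OF m])
  assume "hi m \<noteq> lo m + 1"
  then have gap: "lo m + 1 < hi m" using J.bounds by simp
  have "lo m + 1 \<notin> lo ` {..<m}"
  proof
    assume "lo m + 1 \<in> lo ` {..<m}"
    then obtain m' where "m' < m" "lo m' = lo m + 1" by auto
    then show False using lo_max[of m'] m by simp
  qed
  then have "gam m (lo m + 1) = lo m + 1" using succ_lo_fixed[OF m] orbit_eq_singleton_iff by metis
  then have start: "gam (Suc m) (lo m + 1) = lo m + 1 \<and> hi m \<in> orbit (gam (Suc m)) (lo m)"
    using gam_Suc[OF m] transpose_joins[OF J.perm J.joins] gap by simp
  have "gam q (lo m + 1) = lo m + 1 \<and> hi m \<in> orbit (gam q) (lo m)" if "Suc m \<le> q" "q \<le> k" for q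
    using that
  proof (induction q rule: dec_induct)
    case base
    then show ?case using start by simp
  next
    case (step q)
    then have q: "q < k" by simp
    interpret Q: noncrossing_join n "gam q" "lo q" "hi q" by (rule step_noncrossing_join[OF q])
    have "lo q < lo m" using lo_max[OF q] last[OF q] step.hyps(1) by fastforce
    then have "(gam q \<circ> transpose (lo q) (hi q)) (lo m + 1) = lo m + 1
        \<and> hi m \<in> orbit (gam q \<circ> transpose (lo q) (hi q)) (lo m)"
      using gap step.IH step.prems by (intro Q.keeps_fixed_successor) auto
    then show ?case unfolding gam_Suc[OF q] .
  qed
  then have "gam k (lo m + 1) = lo m + 1" using m by simp
  moreover have "plen n (gam k) = n - 1" using plen_gam_k kn by simp
  ultimately have "lo m = lo m + 1"
    using plen_max_fixed_point[OF gam_permutes[of k]] J.bounds by simp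
  then show False by simp
qed

text \<open>Part 5 in the numbering of the statement, where transpositions are counted from \<open>1\<close>.\<close>
lemma adjacent_if_last_max:
  assumes kn: "k = n - 1" and l: "l \<in> {1..k}"
    and lo_max: "lo (l - 1) = Max ((\<lambda>s. lo (s - 1)) ` {1..n - 1})"
    and last: "l = Max {s \<in> {1..k}. lo (s - 1) = lo (l - 1)}"
  shows "hi (l - 1) = lo (l - 1) + 1"
proof (rule last_max_step_adjacent[OF kn])
  show m: "l - 1 < k" using l by auto
  fix m' assume m': "m' < k"
  have "lo (Suc m' - 1) \<le> Max ((\<lambda>s. lo (s - 1)) ` {1..n - 1})"
    using m' kn by (intro Max_ge) (auto intro!: image_eqI[where x = "Suc m'"])
  then show "lo m' \<le> lo (l - 1)" using lo_max by simp
  assume "lo m' = lo (l - 1)"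
  then have "Suc m' \<le> Max {s \<in> {1..k}. lo (s - 1) = lo (l - 1)}" using m' by (intro Max_ge) auto
  then show "m' \<le> l - 1" using last by simp
qed

end

text \<open>The statement numbers transpositions from \<open>1\<close>; the development above from \<open>0\<close>.\<close>
lemma image_index_shift: "(\<lambda>s. f (s - 1)) ` {1..m} = f ` {..<(m::nat)}"
proof
  show "f ` {..<m} \<subseteq> (\<lambda>s. f (s - 1)) ` {1..m}"
  proof
    fix y assume "y \<in> f ` {..<m}"
    then obtain s where "s < m" "y = f s" by auto
    then show "y \<in> (\<lambda>s. f (s - 1)) ` {1..m}" by (intro image_eqI[of _ _ "Suc s"]) auto
  qed
qed auto

theorem lemma3p1:
  fixes n k l :: nat and g :: "(nat \<times> nat) list"
  assumes "n \<ge> 1" "k \<ge> 1" "g \<in> Sigma_n n k" "l \<in> {1..k}"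
  defines "ii \<equiv> (\<lambda>s. fst (g ! (s - 1)))"
      and "jj \<equiv> (\<lambda>s. snd (g ! (s - 1)))"
      and "C \<equiv> cyc (gpref g (l - 1))"
  shows "((\<forall>x \<in> C (jj l). ii l < x)
          \<and> ii l \<in> {y \<in> C (ii l). \<forall>x \<in> C (jj l). y < x}
          \<and> (\<forall>y \<in> {y \<in> C (ii l). \<forall>x \<in> C (jj l). y < x}. y \<le> ii l))
         \<and> jj l = Max (C (jj l))
         \<and> (\<forall>x \<in> C (ii l + 1). ii l < x)
         \<and> (ii l + 1 \<notin> ii ` {1..l - 1} \<longrightarrow> C (ii l + 1) = {ii l + 1})
         \<and> (k = n - 1 \<and> ii l = Max (ii ` {1..n - 1})
              \<and> l = Max {s \<in> {1..k}. ii s = ii l} \<longrightarrow> jj l = ii l + 1)"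
proof -
  interpret geodesic_chain n k g using assms(1,3) by unfold_locales
  define m where "m = l - 1"
  have m: "m < k" and l: "l = Suc m" using assms(4) unfolding m_def by auto
  interpret J: noncrossing_join n "gam m" "lo m" "hi m" by (rule step_noncrossing_join[OF m])
  have C: "C = orbit (gam m)" using cyc_eq_orbit[OF J.perm] unfolding C_def m_def by auto
  have i: "ii l = lo m" and j: "jj l = hi m" unfolding ii_def jj_def l by simp_all
  have earlier: "ii ` {1..l - 1} = lo ` {..<m}"
    unfolding ii_def m_def[symmetric] by (rule image_index_shift)
  have part1_above: "\<forall>x \<in> C (jj l). ii l < x" unfolding C i j using J.orbit_j_above_i by blast
  have part1_below: "ii l \<in> {y \<in> C (ii l). \<forall>x \<in> C (jj l). y < x}"
    unfolding C i j using J.orbit_j_above_i J.self_in_orbit by blast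
  have part1_largest: "\<forall>y \<in> {y \<in> C (ii l). \<forall>x \<in> C (jj l). y < x}. y \<le> ii l"
    unfolding C i j using J.i_largest_below by blast
  have part2: "jj l = Max (C (jj l))" unfolding C j using J.Max_orbit_j by simp
  have part3: "\<forall>x \<in> C (ii l + 1). ii l < x" unfolding C i using J.orbit_succ_above_i by blast
  have part4: "ii l + 1 \<notin> ii ` {1..l - 1} \<longrightarrow> C (ii l + 1) = {ii l + 1}"
    unfolding C i earlier using succ_lo_fixed[OF m] by blast
  have part5: "k = n - 1 \<and> ii l = Max (ii ` {1..n - 1}) \<and> l = Max {s \<in> {1..k}. ii s = ii l}
      \<longrightarrow> jj l = ii l + 1"
    using adjacent_if_last_max[OF _ assms(4)] unfolding ii_def jj_def by blast
  show ?thesis using part1_above part1_below part1_largest part2 part3 part4 part5 by blast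
qed

end
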